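(* Consider a network $N$ with service-vector set $\mathcal{S}$ and routing matrix $R$. Fix $w\in\mathbb{R}_{++}^n$, an arrival function $A(\cdot)$, and $\lambda\in\mathbb{R}_+^n$. Let $Q(\cdot)$ be a queue length process of $N$ driven by $A(\cdot)$ under a $w$-WMW policy. Let $W=\mathrm{diag}(w)$, $\tilde\lambda=W^{1/2}\lambda$, $\tilde A(t)=W^{1/2}A(t)$ for $t\in\mathbb{Z}_+$, and let $\tilde N$ be the network with service-vector set $\tilde{\mathcal{S}}=W^{1/2}\mathcal{S}$ and routing matrix $\tilde R=W^{1/2}RW^{-1/2}$. Then: (a) $\tilde Q(t)=W^{1/2}Q(t)$ is a queue length process of $\tilde N$ driven by $\tilde A(\cdot)$ under a MW policy; (b) $\tilde q(t)=W^{1/2}q(t)$ is a fluid solution of $\tilde N$ for arrival rate $\tilde\lambda$ and unit weights if and only if $q(\cdot)$ is a fluid solution of $N$ for arrival rate $\lambda$ and weights $w$.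
   Context: A network consists of $n$ queues, a routing matrix $R\in\mathbb{R}^{n\times n}$ with nonnegative entries, and a finite set $\mathcal{S}\subset\mathbb{R}_+^n$ of service vectors. A queue length process driven by $A:\mathbb{Z}_+\to\mathbb{R}_+^n$ evolves by $Q(t+1)=Q(t)+A(t)+(R-I)\min(\mu(t),Q(t))$ (componentwise min), $\mu(t)\in\mathcal{S}$. For weights $w\in\mathbb{R}_{++}^n$, $\mathcal{S}_w(x)=\arg\max_{\mu\in\mathcal{S}}x^T\mathrm{diag}(w)(I-R)\mu$; the $w$-WMW policy chooses $\mu(t)\in\mathcal{S}_w(Q(t))$ arbitrarily; MW is $w=(1,\dots,1)$. A fluid solution for $\lambda\in\mathbb{R}_+^n$ and weights $w$ is an absolutely continuous $q:\mathbb{R}_+\to\mathbb{R}_+^n$ for which there exist $s_\mu:\mathbb{R}_+\to[0,1]$ ($\mu\in\mathcal{S}$) and $y:\mathbb{R}_+\to\mathbb{R}_+^n$ with, for a.e. $t$: $\dot q(t)=\lambda+(R-I)(\sum_\mu s_\mu(t)\mu-y(t))$, $\sum_\mu s_\mu(t)=1$, $y_i(t)\le\sum_\mu s_\mu(t)\mu_i$, $q_i(t)>0\Rightarrow y_i(t)=0$, $\mu\notin\mathcal{S}_w(q(t))\Rightarrow s_\mu(t)=0$. $W^{1/2}\mathcal{S}=\{W^{1/2}\mu:\mu\in\mathcal{S}\}$. *)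

theory Defs
  imports "HOL-Analysis.Analysis"
begin

text \<open>Vectors in R^n are modelled as real^'n, matrices as real^'n^'n
 (n = CARD('n), an arbitrary finite index type).\<close>

definition nonneg_vec :: "real^'n \<Rightarrow> bool" where
  "nonneg_vec x \<longleftrightarrow> (\<forall>i. 0 \<le> x $ i)"

definition pos_vec :: "real^'n \<Rightarrow> bool" where
  "pos_vec x \<longleftrightarrow> (\<forall>i. 0 < x $ i)"

definition diagm :: "real^'n \<Rightarrow> real^'n^'n" where
  "diagm d = (\<chi> i j. if i = j then d $ i else 0)"

definition vmin :: "real^'n \<Rightarrow> real^'n \<Rightarrow> real^'n" where
  "vmin x y = (\<chi> i. min (x $ i) (y $ i))"

definition sqrtW :: "real^'n \<Rightarrow> real^'n \<Rightarrow> real^'n" where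
  "sqrtW w x = diagm (\<chi> i. sqrt (w $ i)) *v x"

definition scaled_routing :: "real^'n \<Rightarrow> real^'n^'n \<Rightarrow> real^'n^'n" where
  "scaled_routing w R = diagm (\<chi> i. sqrt (w $ i)) ** R ** diagm (\<chi> i. inverse (sqrt (w $ i)))"

definition wmw_set :: "real^'n^'n \<Rightarrow> (real^'n) set \<Rightarrow> real^'n \<Rightarrow> real^'n \<Rightarrow> (real^'n) set" where
  "wmw_set R S w x =
     {\<mu> \<in> S. \<forall>\<nu> \<in> S. x \<bullet> ((diagm w ** (mat 1 - R)) *v \<nu>) \<le> x \<bullet> ((diagm w ** (mat 1 - R)) *v \<mu>)}"

definition wmw_qlp :: "real^'n^'n \<Rightarrow> (real^'n) set \<Rightarrow> real^'n \<Rightarrow> (nat \<Rightarrow> real^'n) \<Rightarrow> (nat \<Rightarrow> real^'n) \<Rightarrow> bool" where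
  "wmw_qlp R S w A Q \<longleftrightarrow> nonneg_vec (Q 0) \<and>
     (\<exists>\<mu> :: nat \<Rightarrow> real^'n. \<forall>t. \<mu> t \<in> wmw_set R S w (Q t) \<and>
        Q (Suc t) = Q t + A t + (R - mat 1) *v vmin (\<mu> t) (Q t))"

abbreviation mw_qlp :: "real^'n^'n \<Rightarrow> (real^'n) set \<Rightarrow> (nat \<Rightarrow> real^'n) \<Rightarrow> (nat \<Rightarrow> real^'n) \<Rightarrow> bool" where
  "mw_qlp R S A Q \<equiv> wmw_qlp R S 1 A Q"

definition abs_cont_on :: "real \<Rightarrow> real \<Rightarrow> (real \<Rightarrow> 'a::real_normed_vector) \<Rightarrow> bool" where
  "abs_cont_on a b f \<longleftrightarrow>
     (\<forall>\<epsilon>>0. \<exists>\<delta>>0. \<forall>(m::nat) (l::nat \<Rightarrow> real) (u::nat \<Rightarrow> real).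
        (\<forall>k<m. a \<le> l k \<and> l k \<le> u k \<and> u k \<le> b) \<and>
        (\<forall>j<m. \<forall>k<m. j \<noteq> k \<longrightarrow> u j \<le> l k \<or> u k \<le> l j) \<and>
        (\<Sum>k<m. u k - l k) < \<delta>
        \<longrightarrow> (\<Sum>k<m. norm (f (u k) - f (l k))) < \<epsilon>)"

definition abs_cont_Rplus :: "(real \<Rightarrow> 'a::real_normed_vector) \<Rightarrow> bool" where
  "abs_cont_Rplus f \<longleftrightarrow> (\<forall>T\<ge>0. abs_cont_on 0 T f)"

text \<open>Fluid solution of network (R,S) for arrival rate lam and weights w.
  q is only relevant on R_+ = {0..}.\<close>
definition fluid_solution ::
  "real^'n^'n \<Rightarrow> (real^'n) set \<Rightarrow> real^'n \<Rightarrow> real^'n \<Rightarrow> (real \<Rightarrow> real^'n) \<Rightarrow> bool" where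
  "fluid_solution R S lam w q \<longleftrightarrow>
     abs_cont_Rplus q \<and> (\<forall>t\<ge>0. nonneg_vec (q t)) \<and>
     (\<exists>(s :: real^'n \<Rightarrow> real \<Rightarrow> real) (y :: real \<Rightarrow> real^'n).
        (\<forall>\<mu>\<in>S. \<forall>t\<ge>0. 0 \<le> s \<mu> t \<and> s \<mu> t \<le> 1) \<and>
        (\<forall>t\<ge>0. nonneg_vec (y t)) \<and>
        (AE t in lborel. 0 \<le> t \<longrightarrow>
           (q has_vector_derivative
              (lam + (R - mat 1) *v ((\<Sum>\<mu>\<in>S. s \<mu> t *\<^sub>R \<mu>) - y t))) (at t within {0..}) \<and>
           (\<Sum>\<mu>\<in>S. s \<mu> t) = 1 \<and>
           (\<forall>i. y t $ i \<le> (\<Sum>\<mu>\<in>S. s \<mu> t * \<mu> $ i)) \<and>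
           (\<forall>i. q t $ i > 0 \<longrightarrow> y t $ i = 0) \<and>
           (\<forall>\<mu>\<in>S. \<mu> \<notin> wmw_set R S w (q t) \<longrightarrow> s \<mu> t = 0)))"

end

theory Submission
  imports Defs
begin

text \<open>The map x \<mapsto> W^(1/2) x is an exact change of coordinates between the two networks.
  Since W^(1/2) is symmetric, W^(1/2) x \<bullet> (I - W^(1/2) R W^(-1/2)) W^(1/2) \<mu> = x \<bullet> W (I - R) \<mu>,
  so the MW objective of the scaled network at W^(1/2) x is the w-WMW objective of the original
  network at x.  Moreover W^(1/2) is a positive diagonal linear bijection: it commutes with
  componentwise minima and preserves the signs of coordinates, absolute continuity and
  derivatives, so it carries every dynamic equation of one network to the corresponding
  equation of the other.\<close>

lemma abs_cont_on_bounded_linear: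
  assumes g: "bounded_linear g" and f: "abs_cont_on a b f"
  shows "abs_cont_on a b (\<lambda>t. g (f t))"
  unfolding abs_cont_on_def
proof (intro allI impI)
  fix e :: real
  assume "e > 0"
  obtain K where K: "K > 0" "\<And>x. norm (g x) \<le> norm x * K"
    using bounded_linear.pos_bounded[OF g] by blast
  with \<open>e > 0\<close> have "e / K > 0" by simp
  with f obtain d where "d > 0" and d: "\<And>m l u.
      (\<forall>k<m. a \<le> l k \<and> l k \<le> u k \<and> u k \<le> b) \<and>
      (\<forall>j<m. \<forall>k<m. j \<noteq> k \<longrightarrow> u j \<le> l k \<or> u k \<le> l j) \<and>
      (\<Sum>k<m. u k - l k) < d
      \<Longrightarrow> (\<Sum>k<(m::nat). norm (f (u k) - f (l k))) < e / K"
    unfolding abs_cont_on_def by blast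
  show "\<exists>d>0. \<forall>(m::nat) l u.
      (\<forall>k<m. a \<le> l k \<and> l k \<le> u k \<and> u k \<le> b) \<and>
      (\<forall>j<m. \<forall>k<m. j \<noteq> k \<longrightarrow> u j \<le> l k \<or> u k \<le> l j) \<and>
      (\<Sum>k<m. u k - l k) < d
      \<longrightarrow> (\<Sum>k<m. norm (g (f (u k)) - g (f (l k)))) < e"
  proof (intro exI[of _ d] conjI allI impI \<open>d > 0\<close>)
    fix m :: nat and l u
    assume intervals: "(\<forall>k<m. a \<le> l k \<and> l k \<le> u k \<and> u k \<le> b) \<and>
      (\<forall>j<m. \<forall>k<m. j \<noteq> k \<longrightarrow> u j \<le> l k \<or> u k \<le> l j) \<and>
      (\<Sum>k<m. u k - l k) < d"
    have "(\<Sum>k<m. norm (g (f (u k)) - g (f (l k))))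
        \<le> (\<Sum>k<m. norm (f (u k) - f (l k))) * K"
      unfolding sum_distrib_right
      by (intro sum_mono) (metis K(2) g linear_diff bounded_linear.linear)
    also have "\<dots> < e"
      using d[OF intervals] K(1) by (simp add: pos_less_divide_eq)
    finally show "(\<Sum>k<m. norm (g (f (u k)) - g (f (l k)))) < e" .
  qed
qed

lemma abs_cont_Rplus_bounded_linear_iff:
  assumes "bounded_linear f" "bounded_linear g" "\<And>x. g (f x) = x"
  shows "abs_cont_Rplus (\<lambda>t. f (q t)) \<longleftrightarrow> abs_cont_Rplus q"
proof
  assume "abs_cont_Rplus (\<lambda>t. f (q t))"
  then have "abs_cont_Rplus (\<lambda>t. g (f (q t)))"
    unfolding abs_cont_Rplus_def using abs_cont_on_bounded_linear[OF assms(2)] by blast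
  then show "abs_cont_Rplus q"
    by (simp add: assms(3))
qed (use abs_cont_on_bounded_linear[OF assms(1)] in \<open>auto simp: abs_cont_Rplus_def\<close>)

lemma has_vector_derivative_bounded_linear_iff:
  assumes "bounded_linear f" "bounded_linear g" "\<And>x. g (f x) = x"
  shows "((\<lambda>t. f (q t)) has_vector_derivative f v) F \<longleftrightarrow> (q has_vector_derivative v) F"
proof
  assume "((\<lambda>t. f (q t)) has_vector_derivative f v) F"
  from bounded_linear.has_vector_derivative[OF assms(2) this]
  show "(q has_vector_derivative v) F"
    by (simp add: assms(3))
qed (rule bounded_linear.has_vector_derivative[OF assms(1)])

lemma diagm_mult_vector_nth [simp]: "(diagm d *v x) $ i = d $ i * x $ i"
proof -
  have "(if i = j then d $ i else 0) * x $ j = (if i = j then d $ i * x $ i else 0)" for j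
    by simp
  then show ?thesis by (simp add: diagm_def matrix_vector_mult_def)
qed

lemma diagm_one: "diagm 1 = mat 1"
  by (simp add: diagm_def mat_def vec_eq_iff)

lemma sqrtW_nth [simp]: "sqrtW w x $ i = sqrt (w $ i) * x $ i"
  by (simp add: sqrtW_def)

definition sqrtW_inv :: "real^'n \<Rightarrow> real^'n \<Rightarrow> real^'n" where
  "sqrtW_inv w x = (\<chi> i. x $ i / sqrt (w $ i))"

lemma sqrtW_inv_nth [simp]: "sqrtW_inv w x $ i = x $ i / sqrt (w $ i)"
  by (simp add: sqrtW_inv_def)

lemma pos_vec_sqrt_pos: "pos_vec w \<Longrightarrow> 0 < sqrt (w $ i)"
  by (simp add: pos_vec_def)

lemma sqrtW_inv_sqrtW [simp]: "pos_vec w \<Longrightarrow> sqrtW_inv w (sqrtW w x) = x"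
  by (simp add: vec_eq_iff pos_vec_def less_imp_neq[symmetric])

lemma sqrtW_sqrtW_inv [simp]: "pos_vec w \<Longrightarrow> sqrtW w (sqrtW_inv w x) = x"
  by (simp add: vec_eq_iff pos_vec_def less_imp_neq[symmetric])

lemma inj_sqrtW: "pos_vec w \<Longrightarrow> inj (sqrtW w)"
  by (metis injI sqrtW_inv_sqrtW)

lemma linear_sqrtW: "linear (sqrtW w)"
  by (rule linearI) (simp_all add: vec_eq_iff algebra_simps)

lemma bounded_linear_sqrtW: "bounded_linear (sqrtW w)"
  using linear_sqrtW by (rule linear_conv_bounded_linear[THEN iffD1])

lemma bounded_linear_sqrtW_inv: "bounded_linear (sqrtW_inv w)"
  by (rule linear_conv_bounded_linear[THEN iffD1], rule linearI)
    (simp_all add: vec_eq_iff add_divide_distrib)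

lemma sqrtW_nth_pos_iff:
  assumes "pos_vec w"
  shows "0 < sqrtW w x $ i \<longleftrightarrow> 0 < x $ i"
  by (metis sqrtW_nth mult_zero_right mult_less_cancel_left_pos pos_vec_sqrt_pos assms)

lemma nonneg_vec_sqrtW_iff:
  assumes "pos_vec w"
  shows "nonneg_vec (sqrtW w x) \<longleftrightarrow> nonneg_vec x"
proof -
  have "0 \<le> sqrt (w $ i) * x $ i \<longleftrightarrow> 0 \<le> x $ i" for i
    by (metis mult_zero_right mult_le_cancel_left_pos pos_vec_sqrt_pos assms)
  then show ?thesis by (simp add: nonneg_vec_def)
qed

lemma vmin_sqrtW:
  assumes "pos_vec w"
  shows "vmin (sqrtW w x) (sqrtW w y) = sqrtW w (vmin x y)"
proof -
  have "min (sqrt (w $ i) * x $ i) (sqrt (w $ i) * y $ i) = sqrt (w $ i) * min (x $ i) (y $ i)" for i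
    by (metis min_mult_distrib_left less_imp_le pos_vec_sqrt_pos assms)
  then show ?thesis by (simp add: vec_eq_iff vmin_def)
qed

lemma sum_sqrtW_image:
  "pos_vec w \<Longrightarrow> (\<Sum>\<nu>\<in>sqrtW w ` S. f \<nu>) = (\<Sum>\<mu>\<in>S. f (sqrtW w \<mu>))"
  by (simp add: sum.reindex inj_on_subset[OF inj_sqrtW])

lemma scaled_routing_mult_sqrtW:
  assumes "pos_vec w"
  shows "scaled_routing w R *v sqrtW w x = sqrtW w (R *v x)"
proof -
  have "diagm (\<chi> i. inverse (sqrt (w $ i))) *v sqrtW w x = x"
    using assms by (simp add: vec_eq_iff pos_vec_def less_imp_neq[symmetric])
  then show ?thesis
    unfolding scaled_routing_def by (metis sqrtW_def matrix_vector_mul_assoc)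
qed

lemma scaled_routing_minus_one_mult_sqrtW:
  "pos_vec w \<Longrightarrow> (scaled_routing w R - mat 1) *v sqrtW w x = sqrtW w ((R - mat 1) *v x)"
  by (simp add: matrix_vector_mult_diff_rdistrib scaled_routing_mult_sqrtW
      linear_diff[OF linear_sqrtW])

lemma one_minus_scaled_routing_mult_sqrtW:
  "pos_vec w \<Longrightarrow> (mat 1 - scaled_routing w R) *v sqrtW w x = sqrtW w ((mat 1 - R) *v x)"
  by (simp add: matrix_vector_mult_diff_rdistrib scaled_routing_mult_sqrtW
      linear_diff[OF linear_sqrtW])

lemma inner_sqrtW_sqrtW:
  assumes "pos_vec w"
  shows "sqrtW w x \<bullet> sqrtW w y = x \<bullet> (diagm w *v y)"
proof -
  have "sqrt (w $ i) * x $ i * (sqrt (w $ i) * y $ i) = x $ i * (w $ i * y $ i)" for i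
    using assms by (simp add: pos_vec_def less_imp_le algebra_simps)
  then show ?thesis
    unfolding inner_vec_def inner_real_def sqrtW_nth diagm_mult_vector_nth by (intro sum.cong refl)
qed

lemma sqrtW_mem_wmw_set_scaled_iff:
  assumes w: "pos_vec w"
  shows "sqrtW w \<mu> \<in> wmw_set (scaled_routing w R) (sqrtW w ` S) 1 (sqrtW w x)
    \<longleftrightarrow> \<mu> \<in> wmw_set R S w x"
proof -
  have objective: "sqrtW w x \<bullet> ((diagm 1 ** (mat 1 - scaled_routing w R)) *v sqrtW w \<nu>)
      = x \<bullet> ((diagm w ** (mat 1 - R)) *v \<nu>)" for \<nu>
  proof -
    have "sqrtW w x \<bullet> ((diagm 1 ** (mat 1 - scaled_routing w R)) *v sqrtW w \<nu>)
        = sqrtW w x \<bullet> sqrtW w ((mat 1 - R) *v \<nu>)"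
      using w by (simp add: diagm_one one_minus_scaled_routing_mult_sqrtW)
    also have "\<dots> = x \<bullet> ((diagm w ** (mat 1 - R)) *v \<nu>)"
      using w by (simp add: inner_sqrtW_sqrtW matrix_vector_mul_assoc)
    finally show ?thesis .
  qed
  have "sqrtW w \<mu> \<in> sqrtW w ` S \<longleftrightarrow> \<mu> \<in> S"
    using inj_sqrtW[OF w] by (rule inj_image_mem_iff)
  with objective show ?thesis
    unfolding wmw_set_def by auto
qed

lemma mw_qlp_sqrtW:
  assumes w: "pos_vec w" and Q: "wmw_qlp R S w A Q"
  shows "mw_qlp (scaled_routing w R) (sqrtW w ` S) (\<lambda>t. sqrtW w (A t)) (\<lambda>t. sqrtW w (Q t))"
proof -
  obtain \<mu> where Q0: "nonneg_vec (Q 0)"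
    and \<mu>: "\<And>t. \<mu> t \<in> wmw_set R S w (Q t)"
    and step: "\<And>t. Q (Suc t) = Q t + A t + (R - mat 1) *v vmin (\<mu> t) (Q t)"
    using Q unfolding wmw_qlp_def by blast
  show ?thesis
    unfolding wmw_qlp_def
  proof (intro conjI exI[of _ "\<lambda>t. sqrtW w (\<mu> t)"] allI)
    show "nonneg_vec (sqrtW w (Q 0))"
      using Q0 nonneg_vec_sqrtW_iff[OF w] by blast
  next
    fix t
    show "sqrtW w (\<mu> t) \<in> wmw_set (scaled_routing w R) (sqrtW w ` S) 1 (sqrtW w (Q t))"
      using \<mu> sqrtW_mem_wmw_set_scaled_iff[OF w] by blast
    show "sqrtW w (Q (Suc t)) = sqrtW w (Q t) + sqrtW w (A t)
        + (scaled_routing w R - mat 1) *v vmin (sqrtW w (\<mu> t)) (sqrtW w (Q t))"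
      using w by (simp add: step vmin_sqrtW scaled_routing_minus_one_mult_sqrtW
          linear_add[OF linear_sqrtW])
  qed
qed

definition fluid_conditions_at ::
  "real^'n^'n \<Rightarrow> (real^'n) set \<Rightarrow> real^'n \<Rightarrow> real^'n \<Rightarrow> (real \<Rightarrow> real^'n)
    \<Rightarrow> (real^'n \<Rightarrow> real \<Rightarrow> real) \<Rightarrow> (real \<Rightarrow> real^'n) \<Rightarrow> real \<Rightarrow> bool" where
  "fluid_conditions_at R S lam w q s y t \<longleftrightarrow>
     (q has_vector_derivative
        (lam + (R - mat 1) *v ((\<Sum>\<mu>\<in>S. s \<mu> t *\<^sub>R \<mu>) - y t))) (at t within {0..}) \<and>
     (\<Sum>\<mu>\<in>S. s \<mu> t) = 1 \<and>
     (\<forall>i. y t $ i \<le> (\<Sum>\<mu>\<in>S. s \<mu> t * \<mu> $ i)) \<and>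
     (\<forall>i. q t $ i > 0 \<longrightarrow> y t $ i = 0) \<and>
     (\<forall>\<mu>\<in>S. \<mu> \<notin> wmw_set R S w (q t) \<longrightarrow> s \<mu> t = 0)"

definition fluid_witness ::
  "real^'n^'n \<Rightarrow> (real^'n) set \<Rightarrow> real^'n \<Rightarrow> real^'n \<Rightarrow> (real \<Rightarrow> real^'n)
    \<Rightarrow> (real^'n \<Rightarrow> real \<Rightarrow> real) \<Rightarrow> (real \<Rightarrow> real^'n) \<Rightarrow> bool" where
  "fluid_witness R S lam w q s y \<longleftrightarrow>
     (\<forall>\<mu>\<in>S. \<forall>t\<ge>0. 0 \<le> s \<mu> t \<and> s \<mu> t \<le> 1) \<and>
     (\<forall>t\<ge>0. nonneg_vec (y t)) \<and>
     (AE t in lborel. 0 \<le> t \<longrightarrow> fluid_conditions_at R S lam w q s y t)"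

lemma fluid_solution_iff_witness:
  "fluid_solution R S lam w q \<longleftrightarrow>
     abs_cont_Rplus q \<and> (\<forall>t\<ge>0. nonneg_vec (q t)) \<and> (\<exists>s y. fluid_witness R S lam w q s y)"
  by (simp add: fluid_solution_def fluid_witness_def fluid_conditions_at_def)

lemma fluid_conditions_at_sqrtW_iff:
  assumes w: "pos_vec w"
  shows "fluid_conditions_at (scaled_routing w R) (sqrtW w ` S) (sqrtW w lam) 1
      (\<lambda>t. sqrtW w (q t)) (\<lambda>\<nu>. s (sqrtW_inv w \<nu>)) (\<lambda>t. sqrtW w (y t)) t
    \<longleftrightarrow> fluid_conditions_at R S lam w q s y t"
proof -
  have allocation: "(\<Sum>\<nu>\<in>sqrtW w ` S. s (sqrtW_inv w \<nu>) t *\<^sub>R \<nu>)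
      = sqrtW w (\<Sum>\<mu>\<in>S. s \<mu> t *\<^sub>R \<mu>)"
    using w by (simp add: sum_sqrtW_image linear_sum[OF linear_sqrtW] linear_scale[OF linear_sqrtW])
  have rate: "sqrtW w lam + (scaled_routing w R - mat 1)
        *v ((\<Sum>\<nu>\<in>sqrtW w ` S. s (sqrtW_inv w \<nu>) t *\<^sub>R \<nu>) - sqrtW w (y t))
      = sqrtW w (lam + (R - mat 1) *v ((\<Sum>\<mu>\<in>S. s \<mu> t *\<^sub>R \<mu>) - y t))"
    by (simp only: allocation linear_diff[OF linear_sqrtW, symmetric]
        scaled_routing_minus_one_mult_sqrtW[OF w] linear_add[OF linear_sqrtW, symmetric])
  have total: "(\<Sum>\<nu>\<in>sqrtW w ` S. s (sqrtW_inv w \<nu>) t) = (\<Sum>\<mu>\<in>S. s \<mu> t)"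
    using w by (simp add: sum_sqrtW_image)
  have idle_bound: "sqrtW w (y t) $ i \<le> (\<Sum>\<nu>\<in>sqrtW w ` S. s (sqrtW_inv w \<nu>) t * \<nu> $ i)
      \<longleftrightarrow> y t $ i \<le> (\<Sum>\<mu>\<in>S. s \<mu> t * \<mu> $ i)" for i
  proof -
    have "(\<Sum>\<nu>\<in>sqrtW w ` S. s (sqrtW_inv w \<nu>) t * \<nu> $ i)
        = sqrt (w $ i) * (\<Sum>\<mu>\<in>S. s \<mu> t * \<mu> $ i)"
      using w by (simp add: sum_sqrtW_image sum_distrib_left algebra_simps)
    then show ?thesis
      by (simp only: sqrtW_nth mult_le_cancel_left_pos[OF pos_vec_sqrt_pos[OF w]])
  qed
  have idle_zero: "(0 < sqrtW w (q t) $ i \<longrightarrow> sqrtW w (y t) $ i = 0)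
      \<longleftrightarrow> (0 < q t $ i \<longrightarrow> y t $ i = 0)" for i
    unfolding sqrtW_nth_pos_iff[OF w] using pos_vec_sqrt_pos[OF w, of i] by simp
  have schedule: "(\<forall>\<nu>\<in>sqrtW w ` S.
        \<nu> \<notin> wmw_set (scaled_routing w R) (sqrtW w ` S) 1 (sqrtW w (q t))
          \<longrightarrow> s (sqrtW_inv w \<nu>) t = 0)
      \<longleftrightarrow> (\<forall>\<mu>\<in>S. \<mu> \<notin> wmw_set R S w (q t) \<longrightarrow> s \<mu> t = 0)"
    by (simp only: ball_simps sqrtW_mem_wmw_set_scaled_iff[OF w] sqrtW_inv_sqrtW[OF w])
  show ?thesis
    unfolding fluid_conditions_at_def rate total idle_bound idle_zero schedule
      has_vector_derivative_bounded_linear_iff[OF bounded_linear_sqrtW bounded_linear_sqrtW_inv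
        sqrtW_inv_sqrtW[OF w]] ..
qed

lemma fluid_witness_sqrtW_iff:
  assumes w: "pos_vec w"
  shows "fluid_witness (scaled_routing w R) (sqrtW w ` S) (sqrtW w lam) 1
      (\<lambda>t. sqrtW w (q t)) (\<lambda>\<nu>. s (sqrtW_inv w \<nu>)) (\<lambda>t. sqrtW w (y t))
    \<longleftrightarrow> fluid_witness R S lam w q s y"
  using w by (simp add: fluid_witness_def fluid_conditions_at_sqrtW_iff nonneg_vec_sqrtW_iff)

lemma ex_fluid_witness_sqrtW_iff:
  fixes w :: "real^'n"
  assumes w: "pos_vec w"
  shows "(\<exists>s' y'. fluid_witness (scaled_routing w R) (sqrtW w ` S) (sqrtW w lam) 1
      (\<lambda>t. sqrtW w (q t)) s' y')
    \<longleftrightarrow> (\<exists>s y. fluid_witness R S lam w q s y)"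
proof -
  have reparametrize: "(\<exists>s' y'. P s' y')
      \<longleftrightarrow> (\<exists>s y. P (\<lambda>\<nu>. s (sqrtW_inv w \<nu>)) (\<lambda>t. sqrtW w (y t)))"
    for P :: "(real^'n \<Rightarrow> real \<Rightarrow> real) \<Rightarrow> (real \<Rightarrow> real^'n) \<Rightarrow> bool"
  proof
    assume "\<exists>s' y'. P s' y'"
    then obtain s' y' where "P s' y'" by blast
    define s where "s = (\<lambda>\<mu>. s' (sqrtW w \<mu>))"
    define y where "y = (\<lambda>t. sqrtW_inv w (y' t))"
    have "(\<lambda>\<nu>. s (sqrtW_inv w \<nu>)) = s'" "(\<lambda>t. sqrtW w (y t)) = y'"
      using w by (simp_all add: s_def y_def)
    with \<open>P s' y'\<close> show "\<exists>s y. P (\<lambda>\<nu>. s (sqrtW_inv w \<nu>)) (\<lambda>t. sqrtW w (y t))"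
      by metis
  qed blast
  have "(\<exists>s' y'. fluid_witness (scaled_routing w R) (sqrtW w ` S) (sqrtW w lam) 1
      (\<lambda>t. sqrtW w (q t)) s' y')
    \<longleftrightarrow> (\<exists>s y. fluid_witness (scaled_routing w R) (sqrtW w ` S) (sqrtW w lam) 1
      (\<lambda>t. sqrtW w (q t)) (\<lambda>\<nu>. s (sqrtW_inv w \<nu>)) (\<lambda>t. sqrtW w (y t)))"
    by (rule reparametrize)
  then show ?thesis
    by (simp only: fluid_witness_sqrtW_iff[OF w])
qed

lemma fluid_solution_sqrtW_iff:
  assumes w: "pos_vec w"
  shows "fluid_solution (scaled_routing w R) (sqrtW w ` S) (sqrtW w lam) 1 (\<lambda>t. sqrtW w (q t))
    \<longleftrightarrow> fluid_solution R S lam w q"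
  unfolding fluid_solution_iff_witness ex_fluid_witness_sqrtW_iff[OF w]
    abs_cont_Rplus_bounded_linear_iff[OF bounded_linear_sqrtW bounded_linear_sqrtW_inv
      sqrtW_inv_sqrtW[OF w]]
  using nonneg_vec_sqrtW_iff[OF w] by blast

theorem lemma4:
  fixes R :: "real^'n^'n" and S :: "(real^'n) set" and w lam :: "real^'n"
    and A Q :: "nat \<Rightarrow> real^'n"
  assumes R_nonneg: "\<forall>i j. 0 \<le> R $ i $ j"
    and S_fin: "finite S" and S_nonneg: "\<forall>\<mu>\<in>S. nonneg_vec \<mu>"
    and w_pos: "pos_vec w"
    and A_nonneg: "\<forall>t. nonneg_vec (A t)"
    and lam_nonneg: "nonneg_vec lam"
    and Q: "wmw_qlp R S w A Q"
  shows "mw_qlp (scaled_routing w R) (sqrtW w ` S) (\<lambda>t. sqrtW w (A t)) (\<lambda>t. sqrtW w (Q t))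
       \<and> (\<forall>q :: real \<Rightarrow> real^'n.
            fluid_solution (scaled_routing w R) (sqrtW w ` S) (sqrtW w lam) 1 (\<lambda>t. sqrtW w (q t))
            \<longleftrightarrow> fluid_solution R S lam w q)"
  using mw_qlp_sqrtW[OF w_pos Q] fluid_solution_sqrtW_iff[OF w_pos] by blast

end
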